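(* Let $z_0\in T$ and $k\in\{0,1,2,\dots\}\cup\{\infty\}$. Then $U_5(T,z_0,k)$ is a dense $G_\delta$ subset of $C^k(T)$.
   Context: $T=\{|z|=1\}$, $D(z_0,r)$ the open disk of center $z_0$ and radius $r$. For $k\in\{0,1,2,\dots\}\cup\{\infty\}$, $C^k(T)$ is the space of $u:T\to\mathbb{C}$ such that $\theta\mapsto u(e^{i\theta})$ is $k$ times continuously differentiable on $\mathbb{R}$, with the topology given by the seminorms $\sup_{\theta\in\mathbb{R}}|\frac{d^l}{d\theta^l}u(e^{i\theta})|$ for all integers $0\le l\le k$. $U_5(T,z_0,k)$ is the set of $u\in C^k(T)$ for which there exist no $r>0$ and no holomorphic $F:D(z_0,r)\to\mathbb{C}$ with $F=u$ on $D(z_0,r)\cap T$. *)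

theory Defs
  imports "HOL-Analysis.Analysis" "HOL-Library.Extended_Nat"
begin

abbreviation circleT :: "complex set" where
  "circleT \<equiv> sphere 0 1"

fun vder :: "nat \<Rightarrow> (real \<Rightarrow> complex) \<Rightarrow> real \<Rightarrow> complex" where
  "vder 0 g = g"
| "vder (Suc l) g = (\<lambda>t. vector_derivative (vder l g) (at t))"

definition param :: "(complex \<Rightarrow> complex) \<Rightarrow> real \<Rightarrow> complex" where
  "param u = (\<lambda>\<theta>. u (cis \<theta>))"

text \<open>C^k(T), k in {0,1,2,...} or infinity. A function T to C is represented by
  u :: complex => complex which vanishes off T (canonical representative).\<close>
definition Ck :: "enat \<Rightarrow> (complex \<Rightarrow> complex) set" where
  "Ck k = {u. (\<forall>z. z \<notin> circleT \<longrightarrow> u z = 0) \<and>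
      (\<forall>l::nat. enat l \<le> k \<longrightarrow> continuous_on UNIV (vder l (param u))) \<and>
      (\<forall>l::nat. enat l < k \<longrightarrow> (\<forall>t. vder l (param u) differentiable (at t)))}"

definition seminormCk :: "nat \<Rightarrow> (complex \<Rightarrow> complex) \<Rightarrow> real" where
  "seminormCk l u = (SUP \<theta>. norm (vder l (param u) \<theta>))"

definition Ck_topology :: "enat \<Rightarrow> (complex \<Rightarrow> complex) topology" where
  "Ck_topology k = topology (\<lambda>U. U \<subseteq> Ck k \<and>
      (\<forall>u\<in>U. \<exists>n::nat. \<exists>\<epsilon>>0. enat n \<le> k \<and>
         {v \<in> Ck k. \<forall>j\<le>n. seminormCk j (\<lambda>z. v z - u z) < \<epsilon>} \<subseteq> U))"

definition U5 :: "complex \<Rightarrow> enat \<Rightarrow> (complex \<Rightarrow> complex) set" where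
  "U5 z0 k = {u \<in> Ck k. \<not> (\<exists>r>0. \<exists>F. F holomorphic_on ball z0 r \<and>
      (\<forall>z \<in> ball z0 r \<inter> circleT. F z = u z))}"

end

theory Submission
  imports Defs "HOL-Complex_Analysis.Complex_Analysis" "HOL-Real_Asymp.Real_Asymp"
begin

text \<open>
  A function u extends holomorphically at z0 iff for some m it agrees on T near z0 with a
  holomorphic function on the disc of radius 1/(m+1) that is bounded by m+1. By Montel's theorem
  the set of such u is closed even for the sup norm, so U5 is a countable intersection of open sets.

  For density consider h(z) = exp(1/(1 - z/z0)^2) on T - {z0}, h(z0) = 0. On T,
  |h(z)| = exp(1/2 - 1/|z - z0|^2), and every derivative of t \<mapsto> h(e^(it)) is h times a
  function of at most polynomial growth in 1/|z - z0|; hence h is smooth and flat at z0. Along the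
  radius z = (1 - s) z0 the holomorphic function exp(1/(1 - z/z0)^2) equals exp(1/s^2), so h has
  no holomorphic extension at z0. Hence of u + \<delta> h and u + \<delta>/2 h, which are arbitrarily
  close to u, at most one extends: otherwise so would their difference.
\<close>

section \<open>Polynomial growth at a point\<close>

definition poly_growth_at :: "(complex \<Rightarrow> complex) \<Rightarrow> complex \<Rightarrow> bool" where
  "poly_growth_at f a \<longleftrightarrow> (\<exists>C m. \<forall>\<^sub>F w in at a. norm (f w) * norm (w - a) ^ m \<le> C)"

lemma poly_growth_atI:
  assumes "\<forall>\<^sub>F w in at a. norm (f w) * norm (w - a) ^ m \<le> C"
  shows "poly_growth_at f a"
  using assms unfolding poly_growth_at_def by blast

lemma eventually_norm_diff_le_1: "\<forall>\<^sub>F w in at a. norm (w - a) \<le> (1::real)"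
  using eventually_at[of "\<lambda>w. norm (w - a) \<le> 1" a UNIV] by (auto simp: dist_norm intro!: exI[of _ 1])

lemma poly_growth_at_raise:
  assumes "\<forall>\<^sub>F w in at a. norm (f w) * norm (w - a) ^ m \<le> C" "m \<le> M"
  shows "\<forall>\<^sub>F w in at a. norm (f w) * norm (w - a) ^ M \<le> C"
  using assms(1) eventually_norm_diff_le_1[of a]
proof eventually_elim
  case (elim w)
  have "norm (w - a) ^ M \<le> norm (w - a) ^ m" using elim(2) assms(2) by (simp add: power_decreasing)
  then have "norm (f w) * norm (w - a) ^ M \<le> norm (f w) * norm (w - a) ^ m" by (simp add: mult_left_mono)
  with elim(1) show ?case by linarith
qed

lemma poly_growth_at_continuous:
  assumes "isCont f a"
  shows "poly_growth_at f a"
proof -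
  have "\<forall>\<^sub>F w in at a. norm (f w) \<le> norm (f a) + 1"
    using assms unfolding isCont_def
    by (auto dest!: tendstoD[of _ _ _ 1] elim!: eventually_mono simp: dist_norm norm_minus_commute
          intro: order_trans[OF norm_triangle_sub[of _ "f a"]])
  then show ?thesis by (intro poly_growth_atI[where m=0]) simp
qed

lemma poly_growth_at_add:
  assumes "poly_growth_at f a" "poly_growth_at g a"
  shows "poly_growth_at (\<lambda>w. f w + g w) a"
proof -
  obtain C m D n where
    f: "\<forall>\<^sub>F w in at a. norm (f w) * norm (w - a) ^ m \<le> C" and
    g: "\<forall>\<^sub>F w in at a. norm (g w) * norm (w - a) ^ n \<le> D"
    using assms unfolding poly_growth_at_def by blast
  have f': "\<forall>\<^sub>F w in at a. norm (f w) * norm (w - a) ^ max m n \<le> C"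
    and g': "\<forall>\<^sub>F w in at a. norm (g w) * norm (w - a) ^ max m n \<le> D"
    by (intro poly_growth_at_raise[OF f] poly_growth_at_raise[OF g]; simp)+
  have "\<forall>\<^sub>F w in at a. norm (f w + g w) * norm (w - a) ^ max m n \<le> C + D"
    using f' g'
  proof eventually_elim
    case (elim w)
    have "norm (f w + g w) * norm (w - a) ^ max m n
          \<le> norm (f w) * norm (w - a) ^ max m n + norm (g w) * norm (w - a) ^ max m n"
      by (metis distrib_right mult_right_mono norm_ge_zero norm_triangle_ineq zero_le_power)
    with elim show ?case by linarith
  qed
  then show ?thesis by (rule poly_growth_atI)
qed

lemma poly_growth_at_mult:
  assumes "poly_growth_at f a" "poly_growth_at g a"
  shows "poly_growth_at (\<lambda>w. f w * g w) a"
proof -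
  obtain C m D n where
    f: "\<forall>\<^sub>F w in at a. norm (f w) * norm (w - a) ^ m \<le> C" and
    g: "\<forall>\<^sub>F w in at a. norm (g w) * norm (w - a) ^ n \<le> D"
    using assms unfolding poly_growth_at_def by blast
  have "\<forall>\<^sub>F w in at a. norm (f w * g w) * norm (w - a) ^ (m + n) \<le> C * D"
    using f g
  proof eventually_elim
    case (elim w)
    have "norm (f w * g w) * norm (w - a) ^ (m + n)
          = (norm (f w) * norm (w - a) ^ m) * (norm (g w) * norm (w - a) ^ n)"
      by (simp add: norm_mult power_add)
    also have "\<dots> \<le> C * D"
      using elim by (intro mult_mono) (auto intro: order_trans[OF _ elim(1)])
    finally show ?case .
  qed
  then show ?thesis by (rule poly_growth_atI)
qed

lemma poly_growth_at_divide_power: "poly_growth_at (\<lambda>w. c / (a - w) ^ n) a"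
proof (rule poly_growth_atI[where m=n and C="norm c"])
  show "\<forall>\<^sub>F w in at a. norm (c / (a - w) ^ n) * norm (w - a) ^ n \<le> norm c"
    by (auto simp: eventually_at_filter norm_divide norm_power norm_minus_commute)
qed

lemma poly_growth_at_deriv:
  assumes "r > 0" and hol: "f holomorphic_on ball a r - {a}" and growth: "poly_growth_at f a"
  shows "poly_growth_at (deriv f) a"
proof -
  obtain C m where "\<forall>\<^sub>F w in at a. norm (f w) * norm (w - a) ^ m \<le> C"
    using growth unfolding poly_growth_at_def by blast
  then obtain \<rho> where "\<rho> > 0"
    and bound: "\<And>x. x \<noteq> a \<Longrightarrow> norm (x - a) < \<rho> \<Longrightarrow> norm (f x) * norm (x - a) ^ m \<le> C"
    unfolding eventually_at by (auto simp: dist_norm)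
  define s where "s = min \<rho> r / 2"
  have "norm (deriv f w) * norm (w - a) ^ Suc m \<le> C * 2 ^ Suc m"
    if w: "w \<noteq> a" "norm (w - a) < s" for w
  proof -
    define d where "d = norm (w - a) / 2"
    have "d > 0" using w by (simp add: d_def)
    have near: "d \<le> norm (x - a) \<and> norm (x - a) < min \<rho> r" if "x \<in> cball w d" for x
    proof -
      have "norm (w - x) \<le> d" using that by (simp add: dist_norm)
      moreover have "norm (w - a) \<le> norm (w - x) + norm (x - a)"
        using norm_triangle_ineq[of "w - x" "x - a"] by simp
      moreover have "norm (x - a) \<le> norm (w - x) + norm (w - a)"
        using norm_triangle_ineq[of "x - w" "w - a"] by (simp add: norm_minus_commute)
      ultimately show ?thesis using w by (auto simp: d_def s_def)
    qed
    then have sub: "cball w d \<subseteq> ball a r - {a}"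
      using \<open>d > 0\<close> by (force simp: dist_norm norm_minus_commute)
    have "norm (f x) \<le> C / d ^ m" if "norm (w - x) = d" for x
    proof -
      have x: "d \<le> norm (x - a)" "norm (x - a) < \<rho>" "x \<noteq> a"
        using near[of x] that \<open>d > 0\<close> by (auto simp: dist_norm)
      have "norm (f x) * d ^ m \<le> norm (f x) * norm (x - a) ^ m"
        using x \<open>d > 0\<close> by (intro mult_left_mono power_mono) auto
      with bound[OF x(3,2)] \<open>d > 0\<close> show ?thesis by (simp add: field_simps)
    qed
    then have "norm ((deriv ^^ 1) f w) \<le> fact 1 * (C / d ^ m) / d ^ 1"
      using \<open>d > 0\<close> sub ball_subset_cball
      by (intro Cauchy_inequality holomorphic_on_subset[OF hol]
            continuous_on_subset[OF holomorphic_on_imp_continuous_on[OF hol]]) blast+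
    then show ?thesis
      using \<open>d > 0\<close> by (simp add: d_def field_simps)
  qed
  moreover have "s > 0" using \<open>\<rho> > 0\<close> \<open>r > 0\<close> by (simp add: s_def)
  ultimately have "\<forall>\<^sub>F w in at a. norm (deriv f w) * norm (w - a) ^ Suc m \<le> C * 2 ^ Suc m"
    unfolding eventually_at dist_norm by blast
  then show ?thesis by (rule poly_growth_atI)
qed

section \<open>The spaces C^k(T)\<close>

lemma vder_eq_chain:
  assumes "f = G 0"
    and "\<And>j t. enat j < k \<Longrightarrow> (G j has_vector_derivative G (Suc j) t) (at t)"
    and "enat j \<le> k"
  shows "vder j f = G j"
  using assms(3)
proof (induction j)
  case (Suc j)
  then have "enat j < k" by (simp add: Suc_ile_eq)
  with Suc.IH have "vder j f = G j" by simp
  show ?case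
    by (simp add: \<open>vder j f = G j\<close> vector_derivative_at[OF assms(2)[OF \<open>enat j < k\<close>]])
qed (simp add: assms(1))

lemma Ck_has_vector_derivative:
  assumes "u \<in> Ck k" "enat j < k"
  shows "(vder j (param u) has_vector_derivative vder (Suc j) (param u) t) (at t)"
  using assms by (simp add: Ck_def vector_derivative_works)

lemma vder_add:
  assumes "u \<in> Ck k" "v \<in> Ck k" "enat j \<le> k"
  shows "vder j (param (\<lambda>z. u z + v z)) = (\<lambda>t. vder j (param u) t + vder j (param v) t)"
proof (rule vder_eq_chain[OF _ _ assms(3)])
  fix j t assume "enat j < k"
  then show "((\<lambda>t. vder j (param u) t + vder j (param v) t) has_vector_derivative
      vder (Suc j) (param u) t + vder (Suc j) (param v) t) (at t)"
    by (intro has_vector_derivative_add Ck_has_vector_derivative[OF assms(1)]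
          Ck_has_vector_derivative[OF assms(2)])
qed (simp add: param_def)

lemma vder_scale:
  assumes "u \<in> Ck k" "enat j \<le> k"
  shows "vder j (param (\<lambda>z. c * u z)) = (\<lambda>t. c * vder j (param u) t)"
proof (rule vder_eq_chain[OF _ _ assms(2)])
  fix j t assume "enat j < k"
  then show "((\<lambda>t. c * vder j (param u) t) has_vector_derivative c * vder (Suc j) (param u) t) (at t)"
    by (intro has_vector_derivative_mult_right Ck_has_vector_derivative[OF assms(1)])
qed (simp add: param_def)

lemma Ck_add:
  assumes "u \<in> Ck k" "v \<in> Ck k"
  shows "(\<lambda>z. u z + v z) \<in> Ck k"
  using assms vder_add[OF assms] Ck_has_vector_derivative[OF assms(1)] Ck_has_vector_derivative[OF assms(2)]
  unfolding Ck_def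
  by (auto intro!: continuous_intros differentiableI_vector has_vector_derivative_add
           simp del: vder.simps)

lemma Ck_scale:
  assumes "u \<in> Ck k"
  shows "(\<lambda>z. c * u z) \<in> Ck k"
  using assms vder_scale[OF assms] Ck_has_vector_derivative[OF assms]
  unfolding Ck_def
  by (auto intro!: continuous_intros differentiableI_vector has_vector_derivative_mult_right
           simp del: vder.simps)

lemma Ck_diff:
  assumes "u \<in> Ck k" "v \<in> Ck k"
  shows "(\<lambda>z. u z - v z) \<in> Ck k"
  using Ck_add[OF assms(1) Ck_scale[OF assms(2), of "-1"]] by simp

lemma bounded_range_comp_cis:
  assumes "continuous_on UNIV (\<lambda>t. f (cis t))"
  shows "bounded (range (\<lambda>t. f (cis t)))"
proof -
  have "range (\<lambda>t. f (cis t)) \<subseteq> (\<lambda>t. f (cis t)) ` {-pi..pi}"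
  proof
    fix y assume "y \<in> range (\<lambda>t. f (cis t))"
    then obtain t where "y = f (cis t)" by blast
    moreover have "cis (Arg (cis t)) = cis t" by (simp add: cis_Arg)
    moreover have "Arg (cis t) \<in> {-pi..pi}" using Arg_bounded[of "cis t"] by auto
    ultimately show "y \<in> (\<lambda>t. f (cis t)) ` {-pi..pi}" by (metis image_eqI)
  qed
  moreover have "compact ((\<lambda>t. f (cis t)) ` {-pi..pi})"
    by (intro compact_continuous_image continuous_on_subset[OF assms]) auto
  ultimately show ?thesis by (meson bounded_subset compact_imp_bounded)
qed

lemma bdd_above_seminormCk:
  assumes "bounded (range (vder j (param u)))"
  shows "bdd_above (range (\<lambda>t. norm (vder j (param u) t)))"
  using assms bdd_above_norm[of "range (vder j (param u))"] by (simp add: image_image)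

lemma norm_le_seminormCk_0:
  assumes "u \<in> Ck k" "z \<in> circleT"
  shows "norm (u z) \<le> seminormCk 0 u"
proof -
  have "enat 0 \<le> k" by (simp add: zero_enat_def[symmetric])
  with assms(1) have "continuous_on UNIV (vder 0 (param u))" unfolding Ck_def by blast
  then have "continuous_on UNIV (\<lambda>t. u (cis t))" by (simp add: param_def)
  then have "bdd_above (range (\<lambda>t. norm (vder 0 (param u) t)))"
    by (intro bdd_above_seminormCk) (simp add: param_def bounded_range_comp_cis)
  moreover have "z \<noteq> 0" using assms(2) by auto
  then have "u z = vder 0 (param u) (Arg z)"
    using assms(2) by (simp add: param_def cis_Arg sgn_div_norm)
  ultimately show ?thesis
    unfolding seminormCk_def by (metis cSUP_upper UNIV_I)
qed

lemma seminormCk_scale_le: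
  assumes "u \<in> Ck k" "enat j \<le> k" "bounded (range (vder j (param u)))"
  shows "seminormCk j (\<lambda>z. c * u z) \<le> norm c * seminormCk j u"
  unfolding seminormCk_def vder_scale[OF assms(1,2)] norm_mult
  by (intro cSUP_least mult_left_mono cSUP_upper bdd_above_seminormCk assms(3)) auto

definition Ck_ball :: "enat \<Rightarrow> (complex \<Rightarrow> complex) \<Rightarrow> nat \<Rightarrow> real \<Rightarrow> (complex \<Rightarrow> complex) set" where
  "Ck_ball k u n \<epsilon> = {v \<in> Ck k. \<forall>j\<le>n. seminormCk j (\<lambda>z. v z - u z) < \<epsilon>}"

definition Ck_openin :: "enat \<Rightarrow> (complex \<Rightarrow> complex) set \<Rightarrow> bool" where
  "Ck_openin k U \<longleftrightarrow> U \<subseteq> Ck k \<and> (\<forall>u\<in>U. \<exists>n \<epsilon>. \<epsilon> > 0 \<and> enat n \<le> k \<and> Ck_ball k u n \<epsilon> \<subseteq> U)"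

lemma Ck_ball_subset: "Ck_ball k u n \<epsilon> \<subseteq> Ck k"
  by (auto simp: Ck_ball_def)

lemma Ck_ball_mono:
  assumes "n \<le> n'" "\<epsilon>' \<le> \<epsilon>"
  shows "Ck_ball k u n' \<epsilon>' \<subseteq> Ck_ball k u n \<epsilon>"
proof
  fix v assume v: "v \<in> Ck_ball k u n' \<epsilon>'"
  have "seminormCk j (\<lambda>z. v z - u z) < \<epsilon>" if "j \<le> n" for j
  proof -
    have "seminormCk j (\<lambda>z. v z - u z) < \<epsilon>'"
      using v assms(1) that by (simp add: Ck_ball_def)
    with assms(2) show ?thesis by linarith
  qed
  with v show "v \<in> Ck_ball k u n \<epsilon>" by (simp add: Ck_ball_def)
qed

lemma istopology_Ck_openin: "istopology (Ck_openin k)"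
  unfolding istopology_def
proof (intro conjI allI impI)
  fix S T assume "Ck_openin k S" "Ck_openin k T"
  show "Ck_openin k (S \<inter> T)"
    unfolding Ck_openin_def
  proof (intro conjI ballI)
    fix u assume "u \<in> S \<inter> T"
    then obtain n1 \<epsilon>1 n2 \<epsilon>2 where "\<epsilon>1 > 0" "enat n1 \<le> k" "Ck_ball k u n1 \<epsilon>1 \<subseteq> S"
      and "\<epsilon>2 > 0" "enat n2 \<le> k" "Ck_ball k u n2 \<epsilon>2 \<subseteq> T"
      using \<open>Ck_openin k S\<close> \<open>Ck_openin k T\<close> unfolding Ck_openin_def by blast
    moreover have "Ck_ball k u (max n1 n2) (min \<epsilon>1 \<epsilon>2) \<subseteq> Ck_ball k u n1 \<epsilon>1 \<inter> Ck_ball k u n2 \<epsilon>2"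
      by (intro Int_greatest Ck_ball_mono) auto
    ultimately show "\<exists>n \<epsilon>. \<epsilon> > 0 \<and> enat n \<le> k \<and> Ck_ball k u n \<epsilon> \<subseteq> S \<inter> T"
      by (intro exI[of _ "max n1 n2"] exI[of _ "min \<epsilon>1 \<epsilon>2"]) (auto simp: max_def)
  qed (use \<open>Ck_openin k S\<close> in \<open>auto simp: Ck_openin_def\<close>)
next
  fix \<K> assume "\<forall>K\<in>\<K>. Ck_openin k K"
  then show "Ck_openin k (\<Union>\<K>)"
    unfolding Ck_openin_def by (meson Union_iff Union_least Union_upper order_trans)
qed

lemma openin_Ck_topology: "openin (Ck_topology k) U \<longleftrightarrow> Ck_openin k U"
proof -
  have "Ck_topology k = topology (Ck_openin k)"
    unfolding Ck_topology_def Ck_openin_def Ck_ball_def by simp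
  then show ?thesis using istopology_Ck_openin by simp
qed

lemma topspace_Ck_topology: "topspace (Ck_topology k) = Ck k"
proof -
  have "Ck_openin k (Ck k)"
    by (auto simp: Ck_openin_def Ck_ball_def zero_enat_def[symmetric] intro!: exI[of _ "0::nat"] exI[of _ "1::real"])
  then show ?thesis
    unfolding topspace_def openin_Ck_topology by (auto simp: Ck_openin_def)
qed

lemma norm_diff_less_Ck_ball:
  assumes "v \<in> Ck_ball k u 0 \<epsilon>" "u \<in> Ck k" "z \<in> circleT"
  shows "norm (v z - u z) < \<epsilon>"
proof -
  have "(\<lambda>z. v z - u z) \<in> Ck k" using assms(1,2) by (intro Ck_diff) (auto simp: Ck_ball_def)
  then have "norm (v z - u z) \<le> seminormCk 0 (\<lambda>z. v z - u z)"
    using norm_le_seminormCk_0[OF _ assms(3)] by blast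
  also have "\<dots> < \<epsilon>" using assms(1) by (simp add: Ck_ball_def)
  finally show ?thesis .
qed

section \<open>A flat function on the circle\<close>

definition flat_exp :: "complex \<Rightarrow> complex" where
  "flat_exp w = exp (1 / (1 - w) ^ 2)"

lemma has_field_derivative_flat_exp:
  assumes "w \<noteq> 1"
  shows "(flat_exp has_field_derivative flat_exp w * (2 / (1 - w) ^ 3)) (at w)"
proof -
  have "1 - w \<noteq> 0" using assms by simp
  have "((\<lambda>w. 1 / (1 - w) ^ 2) has_field_derivative 2 / (1 - w) ^ 3) (at w)"
    by (rule derivative_eq_intros refl | use \<open>1 - w \<noteq> 0\<close> in \<open>simp add: divide_simps eval_nat_numeral\<close>)+
  then show ?thesis
    unfolding flat_exp_def [abs_def] by (rule DERIV_fun_exp)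
qed

lemma flat_exp_holomorphic: "flat_exp holomorphic_on -{1}"
  using has_field_derivative_flat_exp
  by (auto simp: holomorphic_on_def field_differentiable_def intro: has_field_derivative_at_within)

lemma norm_flat_exp_circle:
  assumes "norm w = 1" "w \<noteq> 1"
  shows "norm (flat_exp w) = exp (1/2 - 1 / norm (w - 1) ^ 2)"
proof -
  define d where "d = norm (w - 1) ^ 2"
  have "w * cnj w = 1" using assms(1) complex_norm_square[of w] by simp
  have "of_real d = (w - 1) * cnj (w - 1)" unfolding d_def by (rule complex_norm_square)
  then have "of_real d = - ((1 - w) ^ 2 * cnj w)"
    using \<open>w * cnj w = 1\<close> by (simp add: power2_eq_square algebra_simps)
  moreover have "d \<noteq> 0" "w \<noteq> 0" using assms by (auto simp: d_def)
  ultimately have "1 / (1 - w) ^ 2 = - cnj w / of_real d"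
    by (simp add: field_simps)
  then have "Re (1 / (1 - w) ^ 2) = - Re w / d"
    by (simp add: Re_divide_of_real)
  moreover have "Re w = 1 - d / 2"
    using \<open>of_real d = (w - 1) * cnj (w - 1)\<close> \<open>w * cnj w = 1\<close>
    by (simp add: complex_eq_iff algebra_simps)
  ultimately have "Re (1 / (1 - w) ^ 2) = 1/2 - 1/d"
    using \<open>d \<noteq> 0\<close> by (simp add: field_simps)
  then show ?thesis by (simp add: flat_exp_def norm_exp_eq_Re d_def)
qed

text \<open>With w = cis \<theta> / z0 we have dw/d\<theta> = \<i> w, so the \<theta>-derivative of p(w) flat_exp(w) is
  \<i> w (p'(w) + p(w) 2/(1 - w)^3) flat_exp(w); this is the recursion below.\<close>

fun flat_factor :: "nat \<Rightarrow> complex \<Rightarrow> complex" where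
  "flat_factor 0 = (\<lambda>w. 1)"
| "flat_factor (Suc n) =
     (\<lambda>w. \<i> * w * (deriv (flat_factor n) w + flat_factor n w * (2 / (1 - w) ^ 3)))"

lemma flat_factor_holomorphic: "flat_factor n holomorphic_on -{1}"
proof (induction n)
  case (Suc n)
  then have "deriv (flat_factor n) holomorphic_on -{1}"
    by (intro holomorphic_deriv) (auto simp: open_Compl)
  with Suc show ?case by (auto intro!: holomorphic_intros)
qed (simp add: holomorphic_on_const)

lemma poly_growth_at_flat_factor: "poly_growth_at (flat_factor n) 1"
proof (induction n)
  case 0
  show ?case by (simp add: poly_growth_at_continuous)
next
  case (Suc n)
  have "flat_factor n holomorphic_on ball 1 1 - {1}"
    by (rule holomorphic_on_subset[OF flat_factor_holomorphic]) auto
  then have deriv: "poly_growth_at (deriv (flat_factor n)) 1"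
    using Suc by (intro poly_growth_at_deriv[of 1]) auto
  have linear: "poly_growth_at (\<lambda>w. \<i> * w) 1"
    by (intro poly_growth_at_continuous continuous_intros)
  show ?case
    unfolding flat_factor.simps
    by (rule poly_growth_at_mult[OF linear])
       (intro poly_growth_at_add deriv poly_growth_at_mult Suc poly_growth_at_divide_power)
qed

definition flat_derivs :: "complex \<Rightarrow> nat \<Rightarrow> real \<Rightarrow> complex" where
  "flat_derivs z0 n t =
     (if cis t = z0 then 0 else flat_factor n (cis t / z0) * flat_exp (cis t / z0))"

lemma flat_derivs_has_vector_derivative_off:
  assumes "norm z0 = 1" and "cis \<theta> \<noteq> z0"
  shows "(flat_derivs z0 n has_vector_derivative flat_derivs z0 (Suc n) \<theta>) (at \<theta>)"
proof -
  define w where "w = cis \<theta> / z0"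
  have "z0 \<noteq> 0" using assms(1) by auto
  have "w \<noteq> 1" using assms \<open>z0 \<noteq> 0\<close> unfolding w_def by auto
  have "(flat_factor n has_field_derivative deriv (flat_factor n) w) (at w)"
    using flat_factor_holomorphic \<open>w \<noteq> 1\<close> by (auto intro!: holomorphic_derivI simp: open_Compl)
  then have "((\<lambda>w. flat_factor n w * flat_exp w) has_field_derivative
      (deriv (flat_factor n) w + flat_factor n w * (2 / (1 - w) ^ 3)) * flat_exp w) (at w)"
    by (rule DERIV_mult'[OF _ has_field_derivative_flat_exp[OF \<open>w \<noteq> 1\<close>], THEN DERIV_cong])
       (simp add: algebra_simps)
  moreover have "(cis has_vector_derivative \<i> * cis \<theta>) (at \<theta>)"
    using has_derivative_cis[OF has_derivative_ident] by (simp add: has_vector_derivative_def)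
  then have "((\<lambda>t. cis t / z0) has_vector_derivative \<i> * w) (at \<theta>)"
    unfolding w_def by (auto intro!: derivative_eq_intros)
  ultimately have "(((\<lambda>w. flat_factor n w * flat_exp w) \<circ> (\<lambda>t. cis t / z0)) has_vector_derivative
      \<i> * w * ((deriv (flat_factor n) w + flat_factor n w * (2 / (1 - w) ^ 3)) * flat_exp w))
      (at \<theta>)"
    by (intro field_vector_diff_chain_at) (simp_all add: w_def)
  also have "\<i> * w * ((deriv (flat_factor n) w + flat_factor n w * (2 / (1 - w) ^ 3)) * flat_exp w)
      = flat_derivs z0 (Suc n) \<theta>"
    using assms(2) by (simp add: flat_derivs_def w_def[symmetric])
  finally have "((\<lambda>t. flat_factor n (cis t / z0) * flat_exp (cis t / z0))
      has_vector_derivative flat_derivs z0 (Suc n) \<theta>) (at \<theta>)"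
    by (simp add: o_def)
  moreover have "open {t. cis t \<noteq> z0}"
    by (rule open_Collect_neq) (auto intro!: continuous_intros)
  ultimately show ?thesis
    by (rule has_vector_derivative_transform_within_open) (use assms(2) in \<open>auto simp: flat_derivs_def\<close>)
qed

lemma norm_cis_diff_le: "norm (cis a - cis b) \<le> \<bar>a - b\<bar>"
proof -
  have "norm (cis a - cis b) \<le> 1 * norm (a - b)"
  proof (rule differentiable_bound[of UNIV])
    show "(cis has_derivative (\<lambda>t. t *\<^sub>R (\<i> * cis x))) (at x within UNIV)" for x
      using has_derivative_cis[OF has_derivative_ident] by simp
    show "onorm (\<lambda>t. t *\<^sub>R (\<i> * cis x)) \<le> 1" for x :: real
      by (simp add: onorm_scaleR_left onorm_id norm_mult)
  qed auto
  then show ?thesis by simp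
qed

lemma flat_derivs_bound_near_root:
  assumes "norm z0 = 1" and root: "cis \<theta> = z0"
  obtains \<rho> C m where "\<rho> > 0" and "\<And>y. \<bar>y - \<theta>\<bar> < \<rho> \<Longrightarrow> norm (flat_derivs z0 n y) / \<bar>y - \<theta>\<bar>
      \<le> C * (exp (- 1 / norm (cis y - z0) ^ 2) / norm (cis y - z0) ^ Suc m)"
proof -
  obtain C m where "\<forall>\<^sub>F w in at 1. norm (flat_factor n w) * norm (w - 1) ^ m \<le> C"
    using poly_growth_at_flat_factor unfolding poly_growth_at_def by blast
  then obtain \<rho> where "\<rho> > 0" and growth:
    "\<And>w. w \<noteq> 1 \<Longrightarrow> norm (w - 1) < \<rho> \<Longrightarrow> norm (flat_factor n w) * norm (w - 1) ^ m \<le> C"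
    unfolding eventually_at by (auto simp: dist_norm)
  have bound: "norm (flat_derivs z0 n y) / \<bar>y - \<theta>\<bar>
      \<le> C * exp (1/2) * (exp (- 1 / norm (cis y - z0) ^ 2) / norm (cis y - z0) ^ Suc m)"
    if y: "\<bar>y - \<theta>\<bar> < \<rho>" for y
  proof (cases "cis y = z0")
    case False
    define w where "w = cis y / z0"
    define d where "d = norm (cis y - z0)"
    have "z0 \<noteq> 0" using assms(1) by auto
    have "w - 1 = (cis y - z0) / z0" using \<open>z0 \<noteq> 0\<close> by (simp add: w_def field_simps)
    then have "norm (w - 1) = d" using assms(1) by (simp add: d_def norm_divide)
    have "d \<le> \<bar>y - \<theta>\<bar>"
      unfolding d_def root[symmetric] by (rule norm_cis_diff_le)
    have "norm w = 1" "w \<noteq> 1"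
      using False assms(1) \<open>z0 \<noteq> 0\<close> by (auto simp: w_def norm_divide)
    then have "d > 0" and norm_fd: "norm (flat_derivs z0 n y) = norm (flat_factor n w) * exp (1/2 - 1 / d ^ 2)"
      using False norm_flat_exp_circle[of w] \<open>norm (w - 1) = d\<close>
      by (auto simp: flat_derivs_def w_def[symmetric] norm_mult)
    have "norm (flat_derivs z0 n y) / \<bar>y - \<theta>\<bar> \<le> norm (flat_derivs z0 n y) / d"
      using \<open>d > 0\<close> \<open>d \<le> \<bar>y - \<theta>\<bar>\<close> by (intro divide_left_mono) auto
    also have "\<dots> = norm (flat_factor n w) * d ^ m * (exp (1/2) * (exp (- 1 / d ^ 2) / d ^ Suc m))"
      using \<open>d > 0\<close> by (simp add: norm_fd field_simps flip: exp_add)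
    also have "\<dots> \<le> C * (exp (1/2) * (exp (- 1 / d ^ 2) / d ^ Suc m))"
      using growth[OF \<open>w \<noteq> 1\<close>] \<open>norm (w - 1) = d\<close> \<open>d \<le> \<bar>y - \<theta>\<bar>\<close> y \<open>d > 0\<close>
      by (intro mult_right_mono) auto
    finally show ?thesis by (simp add: d_def mult.assoc)
  qed (simp add: flat_derivs_def)
  show ?thesis using \<open>\<rho> > 0\<close> bound by (rule that)
qed

lemma flat_derivs_has_vector_derivative_root:
  assumes "norm z0 = 1" and root: "cis \<theta> = z0"
  shows "(flat_derivs z0 n has_vector_derivative 0) (at \<theta>)"
proof -
  obtain \<rho> C m where "\<rho> > 0" and bound: "\<And>y. \<bar>y - \<theta>\<bar> < \<rho> \<Longrightarrow> norm (flat_derivs z0 n y) / \<bar>y - \<theta>\<bar>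
      \<le> C * (exp (- 1 / norm (cis y - z0) ^ 2) / norm (cis y - z0) ^ Suc m)"
    by (rule flat_derivs_bound_near_root[OF assms, of n]) blast
  define D where "D y = norm (cis y - z0)" for y
  \<comment> \<open>Division by zero gives \<open>\<psi> 0 = 0\<close>, so \<open>\<psi>\<close> is continuous at 0 from the right.\<close>
  define \<psi> :: "real \<Rightarrow> real" where "\<psi> d = exp (- 1 / d ^ 2) / d ^ Suc m" for d
  have \<psi>_cont: "continuous (at 0 within {0..}) \<psi>"
  proof -
    have "(\<psi> \<longlongrightarrow> 0) (at_right 0)" unfolding \<psi>_def by real_asymp
    then show ?thesis by (simp add: continuous_within at_within_Ici_at_right \<psi>_def)
  qed
  have D_lim: "(D \<longlongrightarrow> 0) (at \<theta>)"
    unfolding D_def using root by (intro tendsto_eq_intros) auto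
  have "((\<lambda>y. \<psi> (D y)) \<longlongrightarrow> \<psi> 0) (at \<theta>)"
    by (rule continuous_within_tendsto_compose'[OF \<psi>_cont _ D_lim]) (simp add: D_def)
  then have "((\<lambda>y. C * \<psi> (D y)) \<longlongrightarrow> 0) (at \<theta>)"
    by (intro tendsto_mult_right_zero) (simp add: \<psi>_def)
  moreover have "\<forall>\<^sub>F y in at \<theta>. norm (norm (flat_derivs z0 n y) / \<bar>y - \<theta>\<bar>) \<le> C * \<psi> (D y)"
    using \<open>\<rho> > 0\<close> bound
    by (auto simp: eventually_at dist_real_def D_def \<psi>_def intro!: exI[of _ \<rho>])
  ultimately have "((\<lambda>y. norm (flat_derivs z0 n y) / \<bar>y - \<theta>\<bar>) \<longlongrightarrow> 0) (at \<theta>)"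
    by (rule Lim_null_comparison[rotated])
  then show ?thesis
    using root
    by (simp add: has_vector_derivative_def has_derivative_iff_norm flat_derivs_def)
qed

lemma flat_derivs_has_vector_derivative:
  assumes "norm z0 = 1"
  shows "(flat_derivs z0 n has_vector_derivative flat_derivs z0 (Suc n) \<theta>) (at \<theta>)"
proof (cases "cis \<theta> = z0")
  case True
  then show ?thesis
    using flat_derivs_has_vector_derivative_root[OF assms True] by (simp add: flat_derivs_def)
qed (rule flat_derivs_has_vector_derivative_off[OF assms])

lemma bounded_range_flat_derivs:
  assumes "norm z0 = 1"
  shows "bounded (range (flat_derivs z0 j))"
proof -
  define K where "K w = (if w = z0 then 0 else flat_factor j (w / z0) * flat_exp (w / z0))" for w
  have "flat_derivs z0 j = (\<lambda>t. K (cis t))" by (simp add: fun_eq_iff K_def flat_derivs_def)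
  moreover have "continuous_on UNIV (flat_derivs z0 j)"
    using flat_derivs_has_vector_derivative[OF assms]
    by (intro continuous_at_imp_continuous_on) (blast intro: has_vector_derivative_continuous)
  ultimately show ?thesis using bounded_range_comp_cis[of K] by simp
qed

definition flat_fn :: "complex \<Rightarrow> complex \<Rightarrow> complex" where
  "flat_fn z0 z = (if z \<in> circleT \<and> z \<noteq> z0 then flat_exp (z / z0) else 0)"

lemma param_flat_fn: "param (flat_fn z0) = flat_derivs z0 0"
  by (simp add: fun_eq_iff param_def flat_fn_def flat_derivs_def)

lemma vder_flat_fn:
  assumes "norm z0 = 1"
  shows "vder j (param (flat_fn z0)) = flat_derivs z0 j"
  by (rule vder_eq_chain[where k=\<infinity>, OF param_flat_fn flat_derivs_has_vector_derivative[OF assms]]) simp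

lemma flat_fn_Ck:
  assumes "norm z0 = 1"
  shows "flat_fn z0 \<in> Ck k"
  using flat_derivs_has_vector_derivative[OF assms]
  by (auto simp: Ck_def vder_flat_fn[OF assms] flat_fn_def intro: differentiableI_vector
           has_vector_derivative_continuous continuous_at_imp_continuous_on)

section \<open>Holomorphic extension at a point of the circle\<close>

lemma islimpt_circle: "z \<in> circleT \<Longrightarrow> z islimpt circleT"
proof (rule connected_imp_perfect)
  fix x :: complex
  have "1 \<in> circleT" "- 1 \<in> circleT" by auto
  then show "circleT \<noteq> {x}" by force
qed (auto intro: connected_sphere)

lemma holomorphic_eq_on_punctured_ball_if_eq_on_circle:
  assumes "z0 \<in> circleT" "r > 0"
    and "f holomorphic_on ball z0 r - {z0}" "g holomorphic_on ball z0 r - {z0}"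
    and eq: "\<And>z. z \<in> (ball z0 r - {z0}) \<inter> circleT \<Longrightarrow> f z = g z"
    and "w \<in> ball z0 r - {z0}"
  shows "f w = g w"
proof -
  define S where "S = ball z0 r - {z0}"
  have "open S" by (simp add: S_def open_Diff)
  obtain \<xi> where "\<xi> \<in> circleT" "\<xi> \<in> S"
  proof -
    have "infinite (circleT \<inter> ball z0 r)"
      using islimpt_circle[OF assms(1)] \<open>r > 0\<close> by (simp add: islimpt_eq_infinite_ball)
    then have "infinite (circleT \<inter> ball z0 r - {z0})" by simp
    then obtain \<xi> where "\<xi> \<in> circleT \<inter> ball z0 r - {z0}"
      using infinite_imp_nonempty by blast
    then show ?thesis using that by (auto simp: S_def)
  qed
  have limpt: "\<xi> islimpt circleT \<inter> S"
    using islimpt_circle[OF \<open>\<xi> \<in> circleT\<close>] eventually_at_in_open'[OF \<open>open S\<close> \<open>\<xi> \<in> S\<close>]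
    by (rule islimpt_Int_eventually)
  have "connected S"
    unfolding S_def using \<open>r > 0\<close> by (intro connected_punctured_convex) (auto simp: aff_dim_open)
  have "f w - g w = 0"
  proof (rule analytic_continuation[of "\<lambda>z. f z - g z" S "circleT \<inter> S" \<xi>])
    show "(\<lambda>z. f z - g z) holomorphic_on S"
      using assms(3,4) unfolding S_def by (intro holomorphic_intros)
  qed (use eq assms(6) \<open>open S\<close> \<open>connected S\<close> \<open>\<xi> \<in> S\<close> limpt in \<open>auto simp: S_def\<close>)
  then show ?thesis by simp
qed

definition extends_holomorphically :: "complex \<Rightarrow> (complex \<Rightarrow> complex) \<Rightarrow> bool" where
  "extends_holomorphically z0 u \<longleftrightarrow>
     (\<exists>r>0. \<exists>F. F holomorphic_on ball z0 r \<and> (\<forall>z\<in>ball z0 r \<inter> circleT. F z = u z))"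

lemma U5_eq: "U5 z0 k = {u \<in> Ck k. \<not> extends_holomorphically z0 u}"
  by (simp add: U5_def extends_holomorphically_def)

lemma extends_holomorphically_lincomb:
  assumes "extends_holomorphically z0 u" "extends_holomorphically z0 v"
  shows "extends_holomorphically z0 (\<lambda>z. a * u z + b * v z)"
proof -
  obtain r1 F1 r2 F2 where "r1 > 0" "F1 holomorphic_on ball z0 r1"
    "\<forall>z\<in>ball z0 r1 \<inter> circleT. F1 z = u z" and "r2 > 0" "F2 holomorphic_on ball z0 r2"
    "\<forall>z\<in>ball z0 r2 \<inter> circleT. F2 z = v z"
    using assms unfolding extends_holomorphically_def by blast
  then show ?thesis
    unfolding extends_holomorphically_def
    by (intro exI[of _ "min r1 r2"] conjI exI[of _ "\<lambda>z. a * F1 z + b * F2 z"])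
       (auto intro!: holomorphic_intros elim: holomorphic_on_subset)
qed

lemma not_extends_holomorphically_flat_fn:
  assumes "norm z0 = 1"
  shows "\<not> extends_holomorphically z0 (flat_fn z0)"
proof
  assume "extends_holomorphically z0 (flat_fn z0)"
  then obtain r F where "r > 0" and F: "F holomorphic_on ball z0 r"
    and agree: "\<And>z. z \<in> ball z0 r \<inter> circleT \<Longrightarrow> F z = flat_fn z0 z"
    unfolding extends_holomorphically_def by blast
  have "z0 \<noteq> 0" using assms by auto
  define \<gamma> where "\<gamma> s = z0 * (1 - of_real s)" for s :: real
  have "(\<lambda>z. flat_exp (z / z0)) holomorphic_on ball z0 r - {z0}"
    using \<open>z0 \<noteq> 0\<close>
    by (intro holomorphic_on_compose_gen[OF _ flat_exp_holomorphic, unfolded o_def])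
       (auto intro!: holomorphic_intros)
  then have F_eq: "F w = flat_exp (w / z0)" if "w \<in> ball z0 r - {z0}" for w
    using holomorphic_eq_on_punctured_ball_if_eq_on_circle[OF _ \<open>r > 0\<close> holomorphic_on_subset[OF F]]
      assms that agree
    by (auto simp: flat_fn_def)
  have "\<forall>\<^sub>F s in at_right 0. norm (F (\<gamma> s)) = exp (1 / s\<^sup>2)"
  proof (rule eventually_at_rightI[of 0 r])
    fix s assume "s \<in> {0<..<r}"
    moreover have "dist z0 (\<gamma> s) = \<bar>s\<bar>"
      using assms by (simp add: \<gamma>_def dist_norm algebra_simps norm_mult)
    ultimately have "\<gamma> s \<in> ball z0 r - {z0}" by auto
    then show "norm (F (\<gamma> s)) = exp (1 / s\<^sup>2)"
      using \<open>z0 \<noteq> 0\<close>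
      by (simp add: F_eq flat_exp_def \<gamma>_def norm_exp_eq_Re Re_divide) (simp add: field_simps eval_nat_numeral)
  qed fact
  moreover have "filterlim (\<lambda>s. exp (1 / s\<^sup>2)) at_top (at_right (0::real))"
    by real_asymp
  ultimately have "filterlim (\<lambda>s. F (\<gamma> s)) at_infinity (at_right 0)"
    unfolding filterlim_at_infinity_conv_norm_at_top by (rule filterlim_cong[THEN iffD2, OF refl refl])
  moreover have "isCont F z0"
    using holomorphic_on_imp_continuous_on[OF F] \<open>r > 0\<close>
    by (simp add: continuous_on_eq_continuous_at)
  then have "((\<lambda>s. F (\<gamma> s)) \<longlongrightarrow> F z0) (at_right 0)"
    by (rule isCont_tendsto_compose) (auto simp: \<gamma>_def intro!: tendsto_eq_intros)
  ultimately show False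
    using not_tendsto_and_filterlim_at_infinity[of "at_right (0::real)"] by auto
qed

section \<open>Density\<close>

lemma extends_holomorphically_perturbation:
  assumes "\<not> extends_holomorphically z0 h" "a \<noteq> b"
  shows "\<not> extends_holomorphically z0 (\<lambda>z. u z + a * h z) \<or>
         \<not> extends_holomorphically z0 (\<lambda>z. u z + b * h z)"
proof (rule ccontr)
  assume "\<not> ?thesis"
  then have "extends_holomorphically z0
      (\<lambda>z. 1 / (a - b) * (u z + a * h z) + - 1 / (a - b) * (u z + b * h z))"
    by (intro extends_holomorphically_lincomb) auto
  moreover have "1 / (a - b) * (u z + a * h z) + - 1 / (a - b) * (u z + b * h z) = h z" for z
  proof -
    have "1 / (a - b) * (u z + a * h z) + - 1 / (a - b) * (u z + b * h z) = (a - b) * h z / (a - b)"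
      by (simp add: diff_divide_distrib add_divide_distrib algebra_simps)
    then show ?thesis using assms(2) by simp
  qed
  ultimately show False using assms(1) by simp
qed

lemma flat_fn_perturbation_in_Ck_ball:
  assumes "norm z0 = 1" "u \<in> Ck k" "\<epsilon> > 0" "enat n \<le> k"
  obtains \<delta> where "\<delta> > 0" "\<And>c. norm c \<le> \<delta> \<Longrightarrow> (\<lambda>z. u z + c * flat_fn z0 z) \<in> Ck_ball k u n \<epsilon>"
proof
  define h where "h = flat_fn z0"
  define M where "M = Max ((\<lambda>j. seminormCk j h) ` {..n})"
  define \<delta> where "\<delta> = \<epsilon> / (\<bar>M\<bar> + 1)"
  show "\<delta> > 0" using \<open>\<epsilon> > 0\<close> by (simp add: \<delta>_def)
  have h: "h \<in> Ck k" unfolding h_def by (rule flat_fn_Ck[OF assms(1)])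
  fix c :: complex assume "norm c \<le> \<delta>"
  have "seminormCk j (\<lambda>z. u z + c * h z - u z) < \<epsilon>" if "j \<le> n" for j
  proof -
    have "enat j \<le> k" using \<open>j \<le> n\<close> assms(4) by (meson enat_ord_simps(1) order_trans)
    have "seminormCk j (\<lambda>z. c * h z) \<le> norm c * seminormCk j h"
      using seminormCk_scale_le[OF h \<open>enat j \<le> k\<close>]
      by (simp add: h_def vder_flat_fn[OF assms(1)] bounded_range_flat_derivs[OF assms(1)])
    also have "\<dots> \<le> norm c * \<bar>M\<bar>"
    proof -
      have "seminormCk j h \<le> M" using \<open>j \<le> n\<close> by (simp add: M_def)
      then show ?thesis by (intro mult_left_mono) auto
    qed
    also have "\<dots> \<le> \<delta> * \<bar>M\<bar>"
      using \<open>norm c \<le> \<delta>\<close> by (intro mult_right_mono) auto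
    also have "\<dots> < \<delta> * (\<bar>M\<bar> + 1)"
      using \<open>\<delta> > 0\<close> by simp
    finally show ?thesis by (simp add: \<delta>_def)
  qed
  then show "(\<lambda>z. u z + c * flat_fn z0 z) \<in> Ck_ball k u n \<epsilon>"
    by (simp add: Ck_ball_def Ck_add[OF assms(2) Ck_scale[OF h]] flip: h_def)
qed

lemma U5_meets_Ck_ball:
  assumes "norm z0 = 1" "u \<in> Ck k" "\<epsilon> > 0" "enat n \<le> k"
  shows "U5 z0 k \<inter> Ck_ball k u n \<epsilon> \<noteq> {}"
proof -
  obtain \<delta> where "\<delta> > 0"
    and ball: "\<And>c. norm c \<le> \<delta> \<Longrightarrow> (\<lambda>z. u z + c * flat_fn z0 z) \<in> Ck_ball k u n \<epsilon>"
    using flat_fn_perturbation_in_Ck_ball[OF assms] by blast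
  have "\<not> extends_holomorphically z0 (\<lambda>z. u z + of_real \<delta> * flat_fn z0 z) \<or>
        \<not> extends_holomorphically z0 (\<lambda>z. u z + of_real (\<delta>/2) * flat_fn z0 z)"
    using \<open>\<delta> > 0\<close>
    by (intro extends_holomorphically_perturbation not_extends_holomorphically_flat_fn assms(1)) simp
  moreover have "(\<lambda>z. u z + of_real \<delta> * flat_fn z0 z) \<in> Ck_ball k u n \<epsilon>"
    "(\<lambda>z. u z + of_real (\<delta>/2) * flat_fn z0 z) \<in> Ck_ball k u n \<epsilon>"
    using \<open>\<delta> > 0\<close> by (intro ball; simp)+
  ultimately show ?thesis
    using Ck_ball_subset unfolding U5_eq by blast
qed

lemma dense_U5:
  assumes "norm z0 = 1"
  shows "(Ck_topology k) closure_of (U5 z0 k) = topspace (Ck_topology k)"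
proof (rule equalityI[OF closure_of_subset_topspace subsetI])
  fix u assume u: "u \<in> topspace (Ck_topology k)"
  have "U5 z0 k \<inter> W \<noteq> {}" if W: "u \<in> W" "openin (Ck_topology k) W" for W
  proof -
    obtain n \<epsilon> where "\<epsilon> > 0" "enat n \<le> k" "Ck_ball k u n \<epsilon> \<subseteq> W"
      using W unfolding openin_Ck_topology Ck_openin_def by blast
    then show ?thesis
      using U5_meets_Ck_ball[OF assms, of u k \<epsilon> n] u by (auto simp: topspace_Ck_topology)
  qed
  with u show "u \<in> (Ck_topology k) closure_of (U5 z0 k)"
    unfolding in_closure_of by blast
qed

section \<open>The G-delta property\<close>

lemma bounded_holomorphic_pointwise_limit:
  assumes "open S" and hol: "\<And>j. F j holomorphic_on S"
    and bound: "\<And>j z. z \<in> S \<Longrightarrow> norm (F j z) \<le> M"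
    and lim: "\<And>z. z \<in> A \<Longrightarrow> (\<lambda>j. F j z) \<longlonglongrightarrow> u z" and "A \<subseteq> S"
  shows "\<exists>g. g holomorphic_on S \<and> (\<forall>z\<in>S. norm (g z) \<le> M) \<and> (\<forall>z\<in>A. g z = u z)"
proof -
  obtain g r where "g holomorphic_on S" "strict_mono r"
    and g: "\<And>z. z \<in> S \<Longrightarrow> (\<lambda>j. F (r j) z) \<longlonglongrightarrow> g z"
    by (rule Montel[OF \<open>open S\<close>, of "range F" F]) (use hol bound in blast)+
  moreover have "norm (g z) \<le> M" if "z \<in> S" for z
    using bound[OF that] by (intro LIMSEQ_le_const2[OF tendsto_norm[OF g[OF that]]]) auto
  moreover have "g z = u z" if "z \<in> A" for z
    using LIMSEQ_subseq_LIMSEQ[OF lim[OF that] \<open>strict_mono r\<close>] g \<open>A \<subseteq> S\<close> that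
    by (auto simp: o_def intro: LIMSEQ_unique)
  ultimately show ?thesis by blast
qed

definition bounded_extensions :: "complex \<Rightarrow> enat \<Rightarrow> nat \<Rightarrow> (complex \<Rightarrow> complex) set" where
  "bounded_extensions z0 k m = {u \<in> Ck k. \<exists>F. F holomorphic_on ball z0 (1 / Suc m) \<and>
      (\<forall>z\<in>ball z0 (1 / Suc m). norm (F z) \<le> Suc m) \<and>
      (\<forall>z\<in>ball z0 (1 / Suc m) \<inter> circleT. F z = u z)}"

lemma extends_holomorphically_iff_bounded_extensions:
  assumes "u \<in> Ck k"
  shows "extends_holomorphically z0 u \<longleftrightarrow> (\<exists>m. u \<in> bounded_extensions z0 k m)"
proof
  assume "extends_holomorphically z0 u"
  then obtain r F where "r > 0" and F: "F holomorphic_on ball z0 r"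
    and agree: "\<forall>z\<in>ball z0 r \<inter> circleT. F z = u z"
    unfolding extends_holomorphically_def by blast
  have "compact (F ` cball z0 (r/2))"
    using \<open>r > 0\<close>
    by (intro compact_continuous_image continuous_on_subset[OF holomorphic_on_imp_continuous_on[OF F]])
       auto
  then obtain B where B: "\<And>z. z \<in> cball z0 (r/2) \<Longrightarrow> norm (F z) \<le> B"
    by (meson compact_imp_bounded bounded_iff imageI)
  obtain m :: nat where m: "max B (2/r) \<le> m" by (meson real_arch_simple)
  then have "1 / Suc m < r / 2"
    using \<open>r > 0\<close> by (simp add: field_simps)
  then have "ball z0 (1 / Suc m) \<subseteq> cball z0 (r/2)" "ball z0 (1 / Suc m) \<subseteq> ball z0 r"
    using \<open>r > 0\<close> by (auto simp: subset_iff)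
  moreover have "norm (F z) \<le> Suc m" if "z \<in> cball z0 (r/2)" for z
    using B[OF that] m by linarith
  ultimately have "u \<in> bounded_extensions z0 k m"
    unfolding bounded_extensions_def using assms agree
    by (intro CollectI conjI exI[of _ F] holomorphic_on_subset[OF F]) auto
  then show "\<exists>m. u \<in> bounded_extensions z0 k m" ..
next
  assume "\<exists>m. u \<in> bounded_extensions z0 k m"
  then obtain m F where "F holomorphic_on ball z0 (1 / Suc m)"
    "\<forall>z\<in>ball z0 (1 / Suc m) \<inter> circleT. F z = u z"
    unfolding bounded_extensions_def by blast
  then show "extends_holomorphically z0 u"
    unfolding extends_holomorphically_def by (intro exI[of _ "1 / Suc m"] conjI exI[of _ F]) auto
qed

lemma U5_eq_Inter: "U5 z0 k = (\<Inter>m. Ck k - bounded_extensions z0 k m)"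
  using extends_holomorphically_iff_bounded_extensions by (auto simp: U5_eq)

lemma bounded_extensions_sup_limit:
  assumes u: "u \<in> Ck k" and "\<And>j. V j \<in> bounded_extensions z0 k m"
    and V_ball: "\<And>j. V j \<in> Ck_ball k u 0 (1 / Suc j)"
  shows "u \<in> bounded_extensions z0 k m"
proof -
  define D where "D = ball z0 (1 / Suc m)"
  have "\<forall>j. \<exists>F. F holomorphic_on D \<and> (\<forall>z\<in>D. norm (F z) \<le> Suc m) \<and> (\<forall>z\<in>D \<inter> circleT. F z = V j z)"
    using assms(2) unfolding bounded_extensions_def D_def by blast
  then obtain F where F: "\<And>j. F j holomorphic_on D" "\<And>j z. z \<in> D \<Longrightarrow> norm (F j z) \<le> Suc m"
    and F_eq: "\<And>j z. z \<in> D \<inter> circleT \<Longrightarrow> F j z = V j z"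
    using choice[of "\<lambda>j F. F holomorphic_on D \<and> (\<forall>z\<in>D. norm (F z) \<le> Suc m) \<and>
      (\<forall>z\<in>D \<inter> circleT. F z = V j z)"] by blast
  have "(\<lambda>j. F j z) \<longlonglongrightarrow> u z" if z: "z \<in> D \<inter> circleT" for z
  proof -
    have "(\<lambda>j. V j z - u z) \<longlonglongrightarrow> 0"
    proof (rule Lim_null_comparison)
      show "\<forall>\<^sub>F j in sequentially. norm (V j z - u z) \<le> inverse (Suc j)"
        using norm_diff_less_Ck_ball[OF V_ball u] z
        by (auto simp: divide_inverse intro!: always_eventually less_imp_le)
    qed (rule LIMSEQ_inverse_real_of_nat)
    then show ?thesis using F_eq[OF z] by (simp add: LIM_zero_iff)
  qed
  then have "\<exists>g. g holomorphic_on D \<and> (\<forall>z\<in>D. norm (g z) \<le> Suc m) \<and> (\<forall>z\<in>D \<inter> circleT. g z = u z)"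
    by (intro bounded_holomorphic_pointwise_limit[where F=F, OF _ F]) (auto simp: D_def)
  then show ?thesis
    using u unfolding bounded_extensions_def D_def by blast
qed

lemma Ck_openin_compl_bounded_extensions: "Ck_openin k (Ck k - bounded_extensions z0 k m)"
  unfolding Ck_openin_def
proof (intro conjI ballI)
  fix u assume u: "u \<in> Ck k - bounded_extensions z0 k m"
  show "\<exists>n \<epsilon>. \<epsilon> > 0 \<and> enat n \<le> k \<and> Ck_ball k u n \<epsilon> \<subseteq> Ck k - bounded_extensions z0 k m"
  proof (rule ccontr)
    assume contra: "\<not> ?thesis"
    have "enat 0 \<le> k" by (simp add: zero_enat_def[symmetric])
    then have "\<not> Ck_ball k u 0 (1 / Suc j) \<subseteq> Ck k - bounded_extensions z0 k m" for j
      using contra by auto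
    then have "\<forall>j. \<exists>v. v \<in> Ck_ball k u 0 (1 / Suc j) \<and> v \<in> bounded_extensions z0 k m"
      using Ck_ball_subset by blast
    then obtain V where "\<And>j. V j \<in> Ck_ball k u 0 (1 / Suc j)"
      and "\<And>j. V j \<in> bounded_extensions z0 k m" by metis
    with u bounded_extensions_sup_limit show False by blast
  qed
qed auto

lemma gdelta_U5: "gdelta_in (Ck_topology k) (U5 z0 k)"
  unfolding U5_eq_Inter
  by (intro gdelta_in_Inter open_imp_gdelta_in)
     (auto simp: openin_Ck_topology Ck_openin_compl_bounded_extensions)

theorem theorem3p17:
  fixes z0 :: complex and k :: enat
  assumes "z0 \<in> circleT"
  shows "gdelta_in (Ck_topology k) (U5 z0 k) \<and>
         (Ck_topology k) closure_of (U5 z0 k) = topspace (Ck_topology k)"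
  using gdelta_U5 dense_U5 assms by simp

end
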